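(* Let $\mathbb O=\{-1,0,1\}$ and $\theta=0$. If $x(0)\in\mathbb O^n$ has no coordinate equal to $0$, then there exists a finite legal update sequence from $x(0)$ leading the system either to a consensus state $(z,\dots,z)$ with $z\neq0$ or to a non-consensus equilibrium.
   Context: Let $n\ge1$, $\mathcal V=\{1,\dots,n\}$, and let $W=(w_{ij})$ be an $n\times n$ row-stochastic matrix. For $x\in\mathbb O^n$, $i\in\mathcal V$, $z\in\mathbb O$, define $C^i_{\mathrm{social}}(z;x)=\sum_{j=1}^n w_{ij}|z-x_j|$ and $P_i(x)=\{z\in\mathbb O: C^i_{\mathrm{social}}(z;x)\le C^i_{\mathrm{social}}(x_i;x),\ |z-\theta|\le |x_i-\theta|\}$. A legal update sequence from $x(0)$ is a finite sequence $(i_1,z_1),\dots,(i_T,z_T)$ with $i_t\in\mathcal V$, generating $x(1),\dots,x(T)$ where $x(t)$ is obtained from $x(t-1)$ by setting coordinate $i_t$ to $z_t$, such that $z_t\in P_{i_t}(x(t-1))$ for every $t$. An equilibrium is a state $x^*$ with $P_i(x^* )=\{x_i^*\}$ for all $i\in\mathcal V$; it is non-consensus if not all coordinates are equal. *)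

theory Defs
  imports Complex_Main
begin

text \<open>Opinion set O = {-1,0,1}; agents V = {1..n}; states are functions nat => int,
  only coordinates in {1..n} are meaningful.\<close>

definition Opn :: "int set" where
  "Opn = {-1, 0, 1}"

definition row_stochastic :: "nat \<Rightarrow> (nat \<Rightarrow> nat \<Rightarrow> real) \<Rightarrow> bool" where
  "row_stochastic n W \<longleftrightarrow>
     (\<forall>i\<in>{1..n}. (\<forall>j\<in>{1..n}. 0 \<le> W i j) \<and> (\<Sum>j\<in>{1..n}. W i j) = 1)"

definition C_social :: "nat \<Rightarrow> (nat \<Rightarrow> nat \<Rightarrow> real) \<Rightarrow> nat \<Rightarrow> int \<Rightarrow> (nat \<Rightarrow> int) \<Rightarrow> real" where
  "C_social n W i z x = (\<Sum>j\<in>{1..n}. W i j * \<bar>real_of_int (z - x j)\<bar>)"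

definition P_set :: "nat \<Rightarrow> (nat \<Rightarrow> nat \<Rightarrow> real) \<Rightarrow> int \<Rightarrow> nat \<Rightarrow> (nat \<Rightarrow> int) \<Rightarrow> int set" where
  "P_set n W \<theta> i x = {z \<in> Opn. C_social n W i z x \<le> C_social n W i (x i) x
                                  \<and> \<bar>z - \<theta>\<bar> \<le> \<bar>x i - \<theta>\<bar>}"

fun legal_seq :: "nat \<Rightarrow> (nat \<Rightarrow> nat \<Rightarrow> real) \<Rightarrow> int \<Rightarrow> (nat \<Rightarrow> int) \<Rightarrow> (nat \<times> int) list \<Rightarrow> bool" where
  "legal_seq n W \<theta> x [] = True"
| "legal_seq n W \<theta> x ((i, z) # rest) =
     (i \<in> {1..n} \<and> z \<in> P_set n W \<theta> i x \<and> legal_seq n W \<theta> (x(i := z)) rest)"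

fun apply_seq :: "(nat \<Rightarrow> int) \<Rightarrow> (nat \<times> int) list \<Rightarrow> (nat \<Rightarrow> int)" where
  "apply_seq x [] = x"
| "apply_seq x ((i, z) # rest) = apply_seq (x(i := z)) rest"

definition equilibrium :: "nat \<Rightarrow> (nat \<Rightarrow> nat \<Rightarrow> real) \<Rightarrow> int \<Rightarrow> (nat \<Rightarrow> int) \<Rightarrow> bool" where
  "equilibrium n W \<theta> x \<longleftrightarrow> (\<forall>i\<in>{1..n}. P_set n W \<theta> i x = {x i})"

definition consensus :: "nat \<Rightarrow> (nat \<Rightarrow> int) \<Rightarrow> bool" where
  "consensus n x \<longleftrightarrow> (\<forall>i\<in>{1..n}. \<forall>j\<in>{1..n}. x i = x j)"

end

theory Submission
  imports Defs
begin

(* For an agent i holding a nonzero opinion v, let s be the weight of the neighbours agreeing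
   with i and d the weight of those disagreeing.  Moving to 0 changes the social cost of i by
   s - d, and flipping to -v changes it by 2 (s - d) plus twice the weight of the neighbours at 0.
   Call i firm if s > d: a firm agent cannot move, and neither can an agent at 0.
   First let non-firm agents at 1 flip to -1 until every agent at 1 is firm; if nobody is left
   at 1, this is consensus on -1.  Otherwise let non-firm agents at -1 move to 0.  This does not
   change the weights seen by the agents at 1, so they stay firm, and the process ends in an
   equilibrium that still contains an agent at 1: either consensus on 1 or a non-consensus
   equilibrium. *)

lemma legal_seq_append:
  "legal_seq n W \<theta> x (us @ vs) \<longleftrightarrow> legal_seq n W \<theta> x us \<and> legal_seq n W \<theta> (apply_seq x us) vs"
  by (induction us arbitrary: x) auto

lemma apply_seq_append: "apply_seq x (us @ vs) = apply_seq (apply_seq x us) vs"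
  by (induction us arbitrary: x) auto

locale opinion_network =
  fixes n :: nat and W :: "nat \<Rightarrow> nat \<Rightarrow> real"
  assumes W_nonneg: "i \<in> {1..n} \<Longrightarrow> j \<in> {1..n} \<Longrightarrow> 0 \<le> W i j"
begin

definition opinion_state :: "(nat \<Rightarrow> int) \<Rightarrow> bool" where
  "opinion_state x \<longleftrightarrow> (\<forall>j\<in>{1..n}. x j \<in> Opn)"

definition polarized :: "(nat \<Rightarrow> int) \<Rightarrow> bool" where
  "polarized x \<longleftrightarrow> (\<forall>j\<in>{1..n}. x j \<in> {-1, 1})"

definition support :: "(nat \<Rightarrow> int) \<Rightarrow> nat \<Rightarrow> real" where
  "support x i = (\<Sum>j\<in>{1..n}. if x j = x i then W i j else 0)"

definition dissent :: "(nat \<Rightarrow> int) \<Rightarrow> nat \<Rightarrow> real" where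
  "dissent x i = (\<Sum>j\<in>{1..n}. if x j \<noteq> x i then W i j else 0)"

definition firm :: "(nat \<Rightarrow> int) \<Rightarrow> nat \<Rightarrow> bool" where
  "firm x i \<longleftrightarrow> dissent x i < support x i"

lemma opinion_state_if_polarized: "polarized x \<Longrightarrow> opinion_state x"
  by (auto simp: polarized_def opinion_state_def Opn_def)

lemma firm_cong:
  assumes "\<forall>j\<in>{1..n}. x j = x i \<longleftrightarrow> y j = y i"
  shows "firm y i \<longleftrightarrow> firm x i"
  unfolding firm_def support_def dissent_def using assms by (auto intro!: sum.cong)

lemma C_social_diff_zero:
  assumes "opinion_state x" "i \<in> {1..n}" "x i \<noteq> 0"
  shows "C_social n W i 0 x - C_social n W i (x i) x = support x i - dissent x i"
proof -
  have "x i = -1 \<or> x i = 1"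
    using assms by (auto simp: opinion_state_def Opn_def)
  moreover have "x j = -1 \<or> x j = 0 \<or> x j = 1" if "j \<in> {1..n}" for j
    using assms(1) that by (auto simp: opinion_state_def Opn_def)
  ultimately show ?thesis
    unfolding C_social_def support_def dissent_def sum_subtractf[symmetric]
    by (intro sum.cong refl) (elim disjE; force)
qed

lemma C_social_diff_opposite:
  assumes "opinion_state x" "i \<in> {1..n}" "x i \<noteq> 0"
  shows "C_social n W i (- x i) x - C_social n W i (x i) x
           = 2 * (support x i - dissent x i) + 2 * (\<Sum>j\<in>{1..n}. if x j = 0 then W i j else 0)"
proof -
  have "x i = -1 \<or> x i = 1"
    using assms by (auto simp: opinion_state_def Opn_def)
  moreover have "x j = -1 \<or> x j = 0 \<or> x j = 1" if "j \<in> {1..n}" for j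
    using assms(1) that by (auto simp: opinion_state_def Opn_def)
  ultimately show ?thesis
    unfolding C_social_def support_def dissent_def sum_subtractf[symmetric]
      sum_distrib_left sum.distrib[symmetric]
    by (intro sum.cong refl) (elim disjE; force)
qed

lemma P_set_firm:
  assumes "opinion_state x" "i \<in> {1..n}" "x i \<noteq> 0" "firm x i"
  shows "P_set n W 0 i x = {x i}"
proof -
  have "0 \<le> (\<Sum>j\<in>{1..n}. if x j = 0 then W i j else 0)"
    using W_nonneg assms(2) by (intro sum_nonneg) auto
  moreover have "x i = -1 \<or> x i = 1"
    using assms(1-3) by (auto simp: opinion_state_def Opn_def)
  then have "z = 0 \<or> z = - x i" if "z \<in> Opn" "z \<noteq> x i" for z
    using that by (auto simp: Opn_def)
  ultimately have "C_social n W i z x > C_social n W i (x i) x" if "z \<in> Opn" "z \<noteq> x i" for z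
    using that assms(4) C_social_diff_zero[OF assms(1-3)] C_social_diff_opposite[OF assms(1-3)]
    unfolding firm_def by force
  moreover have "x i \<in> Opn"
    using assms(1,2) by (auto simp: opinion_state_def)
  ultimately show ?thesis
    unfolding P_set_def by force
qed

lemma zero_mem_P_set_if_not_firm:
  assumes "opinion_state x" "i \<in> {1..n}" "x i \<noteq> 0" "\<not> firm x i"
  shows "0 \<in> P_set n W 0 i x"
  using assms C_social_diff_zero[OF assms(1-3)] by (auto simp: P_set_def Opn_def firm_def)

lemma opposite_mem_P_set_if_not_firm:
  assumes "polarized x" "i \<in> {1..n}" "\<not> firm x i"
  shows "- x i \<in> P_set n W 0 i x"
proof -
  have "x i \<in> {-1, 1}"
    using assms(1,2) by (auto simp: polarized_def)
  moreover have "(\<Sum>j\<in>{1..n}. if x j = 0 then W i j else 0) = 0"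
    using assms(1) by (intro sum.neutral) (auto simp: polarized_def)
  ultimately show ?thesis
    using assms C_social_diff_opposite[OF opinion_state_if_polarized, of x i]
    by (auto simp: P_set_def Opn_def firm_def)
qed

lemma equilibrium_if_nonzero_firm:
  assumes "opinion_state x" "\<forall>i\<in>{1..n}. x i \<noteq> 0 \<longrightarrow> firm x i"
  shows "equilibrium n W 0 x"
  unfolding equilibrium_def
proof
  fix i assume i: "i \<in> {1..n}"
  show "P_set n W 0 i x = {x i}"
  proof (cases "x i = 0")
    case True
    then show ?thesis by (auto simp: P_set_def Opn_def)
  next
    case False
    then show ?thesis using P_set_firm assms i by blast
  qed
qed

lemma legal_seq_to_firm:
  assumes "S x" "w \<noteq> v"
    and step: "\<And>x i. S x \<Longrightarrow> i \<in> {1..n} \<Longrightarrow> x i = v \<Longrightarrow> \<not> firm x i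
                 \<Longrightarrow> w \<in> P_set n W 0 i x \<and> S (x(i := w))"
  shows "\<exists>us. legal_seq n W 0 x us \<and> S (apply_seq x us)
              \<and> (\<forall>i\<in>{1..n}. apply_seq x us i = v \<longrightarrow> firm (apply_seq x us) i)"
  using assms(1)
proof (induction "card {j\<in>{1..n}. x j = v}" arbitrary: x rule: less_induct)
  case less
  show ?case
  proof (cases "\<forall>i\<in>{1..n}. x i = v \<longrightarrow> firm x i")
    case True
    then show ?thesis
      using less.prems by (intro exI[of _ "[]"]) simp
  next
    case False
    then obtain i where i: "i \<in> {1..n}" "x i = v" "\<not> firm x i" by blast
    have "card ({j\<in>{1..n}. x j = v} - {i}) < card {j\<in>{1..n}. x j = v}"
      using i by (intro card_Diff1_less) auto
    moreover have "{j\<in>{1..n}. (x(i := w)) j = v} = {j\<in>{1..n}. x j = v} - {i}"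
      using \<open>w \<noteq> v\<close> by auto
    ultimately have "card {j\<in>{1..n}. (x(i := w)) j = v} < card {j\<in>{1..n}. x j = v}"
      by simp
    with less.hyps step[OF less.prems i] obtain us where
      "legal_seq n W 0 (x(i := w)) us" "S (apply_seq (x(i := w)) us)"
      "\<forall>j\<in>{1..n}. apply_seq (x(i := w)) us j = v \<longrightarrow> firm (apply_seq (x(i := w)) us) j"
      by blast
    then show ?thesis
      using i(1) step[OF less.prems i] by (intro exI[of _ "(i, w) # us"]) simp
  qed
qed

lemma legal_seq_to_firm_ones:
  assumes "polarized x"
  shows "\<exists>us. legal_seq n W 0 x us \<and> polarized (apply_seq x us)
              \<and> (\<forall>i\<in>{1..n}. apply_seq x us i = 1 \<longrightarrow> firm (apply_seq x us) i)"
proof (rule legal_seq_to_firm[where S = polarized and v = 1 and w = "-1", OF assms])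
  fix y i assume "polarized y" "i \<in> {1..n}" "y i = 1" "\<not> firm y i"
  then show "-1 \<in> P_set n W 0 i y \<and> polarized (y(i := -1))"
    using opposite_mem_P_set_if_not_firm[of y i] by (auto simp: polarized_def)
qed simp

lemma legal_seq_to_equilibrium_keeping_ones:
  assumes "polarized x" "\<forall>i\<in>{1..n}. x i = 1 \<longrightarrow> firm x i"
  shows "\<exists>us. legal_seq n W 0 x us \<and> equilibrium n W 0 (apply_seq x us)
              \<and> (\<forall>i\<in>{1..n}. apply_seq x us i = 1 \<longleftrightarrow> x i = 1)"
proof -
  define S where "S y \<longleftrightarrow> opinion_state y \<and> (\<forall>j\<in>{1..n}. y j = 1 \<longleftrightarrow> x j = 1)" for y
  have "\<exists>us. legal_seq n W 0 x us \<and> S (apply_seq x us)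
              \<and> (\<forall>i\<in>{1..n}. apply_seq x us i = -1 \<longrightarrow> firm (apply_seq x us) i)"
  proof (rule legal_seq_to_firm[where S = S and v = "-1" and w = 0])
    show "S x" using assms(1) by (simp add: S_def opinion_state_if_polarized)
  next
    fix y i assume y: "S y" "i \<in> {1..n}" "y i = -1" "\<not> firm y i"
    then have "x i \<noteq> 1"
      unfolding S_def by fastforce
    with y show "0 \<in> P_set n W 0 i y \<and> S (y(i := 0))"
      using zero_mem_P_set_if_not_firm[of y i] by (auto simp: S_def opinion_state_def Opn_def)
  qed simp
  then obtain us where us: "legal_seq n W 0 x us" "S (apply_seq x us)"
    "\<forall>i\<in>{1..n}. apply_seq x us i = -1 \<longrightarrow> firm (apply_seq x us) i" by blast
  have "firm (apply_seq x us) i" if "i \<in> {1..n}" "apply_seq x us i = 1" for i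
    using firm_cong[of x i "apply_seq x us"] us(2) assms(2) that by (auto simp: S_def)
  moreover have "apply_seq x us i = -1 \<or> apply_seq x us i = 0 \<or> apply_seq x us i = 1"
    if "i \<in> {1..n}" for i
    using us(2) that by (auto simp: S_def opinion_state_def Opn_def)
  ultimately have "\<forall>i\<in>{1..n}. apply_seq x us i \<noteq> 0 \<longrightarrow> firm (apply_seq x us) i"
    using us(3) by blast
  then have "equilibrium n W 0 (apply_seq x us)"
    using us(2) by (intro equilibrium_if_nonzero_firm) (auto simp: S_def)
  then show ?thesis
    using us(1,2) by (auto simp: S_def)
qed

end

theorem lemma5:
  fixes n :: nat and W :: "nat \<Rightarrow> nat \<Rightarrow> real" and x0 :: "nat \<Rightarrow> int"
  assumes "n \<ge> 1"
    and "row_stochastic n W"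
    and "\<forall>i\<in>{1..n}. x0 i \<in> Opn \<and> x0 i \<noteq> 0"
  shows "\<exists>us. legal_seq n W 0 x0 us \<and>
           ((\<exists>z. z \<noteq> 0 \<and> (\<forall>i\<in>{1..n}. apply_seq x0 us i = z))
            \<or> (equilibrium n W 0 (apply_seq x0 us) \<and> \<not> consensus n (apply_seq x0 us)))"
proof -
  interpret opinion_network n W
    using assms(2) by unfold_locales (auto simp: row_stochastic_def)
  have "polarized x0"
    using assms(3) by (auto simp: polarized_def Opn_def)
  then obtain us where us: "legal_seq n W 0 x0 us" "polarized (apply_seq x0 us)"
    "\<forall>i\<in>{1..n}. apply_seq x0 us i = 1 \<longrightarrow> firm (apply_seq x0 us) i"
    using legal_seq_to_firm_ones by blast
  show ?thesis
  proof (cases "\<exists>k\<in>{1..n}. apply_seq x0 us k = 1")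
    case False
    then show ?thesis
      using us(1,2) by (intro exI[of _ us] conjI disjI1 exI[of _ "-1"]) (auto simp: polarized_def)
  next
    case True
    then obtain k where k: "k \<in> {1..n}" "apply_seq x0 us k = 1" ..
    obtain vs where vs: "legal_seq n W 0 (apply_seq x0 us) vs"
      "equilibrium n W 0 (apply_seq x0 (us @ vs))" "apply_seq x0 (us @ vs) k = 1"
      using legal_seq_to_equilibrium_keeping_ones[OF us(2,3)] k by (auto simp: apply_seq_append)
    show ?thesis
    proof (cases "consensus n (apply_seq x0 (us @ vs))")
      case True
      then have "\<forall>i\<in>{1..n}. apply_seq x0 (us @ vs) i = 1"
        using k(1) vs(3) unfolding consensus_def by metis
      then show ?thesis
        using us(1) vs(1) by (intro exI[of _ "us @ vs"] conjI disjI1 exI[of _ 1])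
          (auto simp: legal_seq_append)
    next
      case False
      then show ?thesis
        using us(1) vs(1,2) by (intro exI[of _ "us @ vs"]) (auto simp: legal_seq_append)
    qed
  qed
qed

end
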